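(* Let $x,y$ be non-commuting indeterminates and $C=xyx^{-1}y^{-1}$. Let $(R_n)_{n\in\mathbb Z}$ be the solution of $$R_{n+1}CR_{n-1}=R_n^2+1\qquad(n\in\mathbb Z)$$ with $R_0=yxy^{-1}$ and $R_1=y$. Put $$y_1=y^2x^{-1}y^{-1},\qquad y_2=x^{-1}y^{-1},\qquad y_3=xy^{-1}.$$ Then for all $n\ge 0$, $R_nR_0^{-1}$ equals the sum, over all paths on $\{0,1,2,3\}$ with $2n$ steps of the form $i\to i\pm1$ that start and end at $0$, of the weight of the path. The weight of a path is the product, from left to right in the order the steps are taken, of the factor $1$ for each step $i\to i+1$ and the factor $y_i$ for each step $i\to i-1$.
   Context: Work in the free skew field (non-commutative rational functions) over $\mathbb C$ generated by $x,y$. *)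

theory Defs
  imports Main
begin

text \<open>Letters of the free group on x, y: (is_y, is_inverse).\<close>
type_synonym letter = "bool \<times> bool"

definition letter_eval :: "'a::division_ring \<Rightarrow> 'a \<Rightarrow> letter \<Rightarrow> 'a" where
  "letter_eval x y l = (let g = (if fst l then y else x) in if snd l then inverse g else g)"

definition word_eval :: "'a::division_ring \<Rightarrow> 'a \<Rightarrow> letter list \<Rightarrow> 'a" where
  "word_eval x y w = prod_list (map (letter_eval x y) w)"

definition reduced_word :: "letter list \<Rightarrow> bool" where
  "reduced_word w = (\<forall>i. Suc i < length w \<longrightarrow>
      \<not> (fst (w ! i) = fst (w ! Suc i) \<and> snd (w ! i) \<noteq> snd (w ! Suc i)))"

text \<open>x, y behave like free generators of a free skew field: the integral group ring
  of the free group on x, y embeds (distinct reduced words are linearly independent).\<close>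
definition free_pair :: "'a::division_ring \<Rightarrow> 'a \<Rightarrow> bool" where
  "free_pair x y = (\<forall>(W :: letter list set) (c :: letter list \<Rightarrow> int).
      finite W \<longrightarrow> (\<forall>w\<in>W. reduced_word w) \<longrightarrow> (\<exists>w\<in>W. c w \<noteq> 0) \<longrightarrow>
      (\<Sum>w\<in>W. of_int (c w) * word_eval x y w) \<noteq> 0)"

definition yw :: "'a::division_ring \<Rightarrow> 'a \<Rightarrow> nat \<Rightarrow> 'a" where
  "yw x y i = (if i = 1 then y * y * inverse x * inverse y
               else if i = 2 then inverse x * inverse y
               else if i = 3 then x * inverse y else 0)"

definition paths :: "nat \<Rightarrow> nat list set" where
  "paths n = {p. length p = 2 * n + 1 \<and> p ! 0 = 0 \<and> p ! (2 * n) = 0 \<and> set p \<subseteq> {0..3} \<and>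
      (\<forall>i < 2 * n. p ! (i + 1) = p ! i + 1 \<or> p ! i = p ! (i + 1) + 1)}"

definition path_weight :: "'a::division_ring \<Rightarrow> 'a \<Rightarrow> nat list \<Rightarrow> 'a" where
  "path_weight x y p = prod_list (map (\<lambda>i. if p ! (i + 1) = p ! i + 1 then 1 else yw x y (p ! i))
      [0..<length p - 1])"

end

theory Submission
  imports Defs
begin

text \<open>Let \<open>M\<close> be the transfer matrix of two consecutive steps of a walk between the even
  vertices 0 and 2; the first row of \<open>M\<^sup>n\<close> holds the weighted sums \<open>a\<^sub>n\<close> of the walks of
  length \<open>2n\<close> from 0 to 0 and from 0 to 2.  Expanding \<open>M\<^sup>n\<^sup>+\<^sup>2\<close> as \<open>M M\<^sup>n\<^sup>+\<^sup>1\<close> gives a left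
  three-term recurrence for \<open>a\<^sub>n\<close>, expanding it as \<open>M\<^sup>n\<^sup>+\<^sup>1 M\<close> gives a right one, and
  multiplying by \<open>R\<^sub>0\<close> turns both into recurrences for \<open>r\<^sub>n = a\<^sub>n R\<^sub>0\<close> with the same
  coefficients \<open>K\<close> and \<open>C\<close>.  Together they make \<open>r\<^sub>n\<^sub>+\<^sub>2 C r\<^sub>n - r\<^sub>n\<^sub>+\<^sub>1\<^sup>2\<close> independent of \<open>n\<close>,
  and it equals 1 at \<open>n = 0\<close>, so \<open>r\<close> solves the recurrence of \<open>R\<close> with the same initial
  values.  Freeness enters only to make the solution unique: each \<open>a\<^sub>n\<close> is a nonempty sum of
  group words, hence nonzero.\<close>

section \<open>Sums of words in a free pair\<close>

lemma sum_list_map_eq_sum_of_count: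
  "sum_list (map f xs) = (\<Sum>v\<in>set xs. of_nat (count_list xs v) * (f v :: 'b::semiring_1))"
proof (induction xs)
  case (Cons a xs)
  have count_Cons: "of_nat (count_list (a # xs) v) * f v
      = (if a = v then f v else 0) + of_nat (count_list xs v) * f v" for v
    by (simp add: distrib_right)
  show ?case
    unfolding count_Cons sum.distrib
    by (cases "a \<in> set xs") (auto simp: Cons insert_absorb count_list_0_iff)
qed simp

fun cancel_letter :: "letter \<Rightarrow> letter list \<Rightarrow> letter list" where
  "cancel_letter l [] = [l]"
| "cancel_letter l (m # w) = (if fst l = fst m \<and> snd l \<noteq> snd m then w else l # m # w)"

fun reduce_word :: "letter list \<Rightarrow> letter list" where
  "reduce_word [] = []"
| "reduce_word (l # w) = cancel_letter l (reduce_word w)"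

lemma reduced_word_Cons_Cons:
  "reduced_word (a # b # w) \<longleftrightarrow> \<not> (fst a = fst b \<and> snd a \<noteq> snd b) \<and> reduced_word (b # w)"
  unfolding reduced_word_def by (simp add: All_less_Suc2)

lemma reduced_word_Nil: "reduced_word []"
  and reduced_word_singleton: "reduced_word [a]"
  by (simp_all add: reduced_word_def)

lemma reduced_word_ConsD: "reduced_word (a # w) \<Longrightarrow> reduced_word w"
  by (cases w) (auto simp: reduced_word_Nil reduced_word_Cons_Cons)

lemma reduced_word_reduce_word: "reduced_word (reduce_word w)"
proof (induction w)
  case (Cons l w)
  then show ?case
    by (cases "reduce_word w")
       (auto simp: reduced_word_singleton reduced_word_Cons_Cons dest: reduced_word_ConsD)
qed (simp add: reduced_word_Nil)

lemma word_eval_Nil: "word_eval x y [] = 1"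
  and word_eval_Cons: "word_eval x y (l # w) = letter_eval x y l * word_eval x y w"
  and word_eval_append: "word_eval x y (v @ w) = word_eval x y v * word_eval x y w"
  by (simp_all add: word_eval_def)

lemma word_eval_cancel_letter:
  assumes "x \<noteq> 0" "y \<noteq> 0"
  shows "word_eval x y (cancel_letter l w) = letter_eval x y l * word_eval x y w"
proof (cases w)
  case (Cons m v)
  show ?thesis
  proof (cases "fst l = fst m \<and> snd l \<noteq> snd m")
    case True
    then have "letter_eval x y l * letter_eval x y m = 1"
      using assms by (cases l; cases m) (auto simp: letter_eval_def)
    then show ?thesis
      using True Cons by (simp add: word_eval_Cons mult.assoc[symmetric])
  next
    case False
    then show ?thesis using Cons by (auto simp: word_eval_Cons)
  qed
qed (simp add: word_eval_Cons word_eval_Nil)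

lemma word_eval_reduce_word:
  assumes "x \<noteq> 0" "y \<noteq> 0"
  shows "word_eval x y (reduce_word w) = word_eval x y w"
  by (induction w) (simp_all add: word_eval_cancel_letter[OF assms] word_eval_Cons)

lemma free_pair_nonzero:
  assumes "free_pair x y"
  shows "x \<noteq> 0" and "y \<noteq> 0"
  using assms[unfolded free_pair_def, rule_format, of "{[(False, False)]}" "\<lambda>_. 1"]
    assms[unfolded free_pair_def, rule_format, of "{[(True, False)]}" "\<lambda>_. 1"]
  by (simp_all add: reduced_word_singleton word_eval_def letter_eval_def)

text \<open>Reducing every word and collecting equal reduced words turns a nonempty sum of words into
  a combination of distinct reduced words with positive integer coefficients.\<close>
lemma free_pair_sum_words_nonzero:
  assumes free: "free_pair x y" and "ws \<noteq> []"
  shows "sum_list (map (word_eval x y) ws) \<noteq> 0"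
proof -
  let ?vs = "map reduce_word ws"
  have "sum_list (map (word_eval x y) ws) = sum_list (map (word_eval x y) ?vs)"
    using free_pair_nonzero[OF free] by (simp add: word_eval_reduce_word comp_def)
  also have "\<dots> = (\<Sum>v\<in>set ?vs. of_int (int (count_list ?vs v)) * word_eval x y v)"
    unfolding sum_list_map_eq_sum_of_count by simp
  also have "\<dots> \<noteq> 0"
  proof -
    obtain w where "w \<in> set ?vs"
      using \<open>ws \<noteq> []\<close> by (metis last_in_set length_greater_0_conv length_map)
    then have "int (count_list ?vs w) \<noteq> 0"
      by (simp add: count_list_0_iff)
    moreover have "\<forall>v\<in>set ?vs. reduced_word v"
      by (simp add: reduced_word_reduce_word)
    ultimately show ?thesis
      using free[unfolded free_pair_def, rule_format, of "set ?vs" "\<lambda>v. int (count_list ?vs v)"]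
        \<open>w \<in> set ?vs\<close> by blast
  qed
  finally show ?thesis .
qed

section \<open>Matrices of size 2 over a noncommutative ring\<close>

text \<open>\<open>(a, b, c, d)\<close> is the matrix with rows \<open>(a, b)\<close> and \<open>(c, d)\<close>.\<close>
type_synonym 'a mat2 = "'a \<times> 'a \<times> 'a \<times> 'a"

definition mat2_mult :: "'a::ring_1 mat2 \<Rightarrow> 'a mat2 \<Rightarrow> 'a mat2" where
  "mat2_mult M N = (case M of (a, b, c, d) \<Rightarrow> case N of (e, f, g, h) \<Rightarrow>
     (a * e + b * g, a * f + b * h, c * e + d * g, c * f + d * h))"

lemma mat2_mult_assoc: "mat2_mult (mat2_mult L M) N = mat2_mult L (mat2_mult M N)"
  by (cases L; cases M; cases N) (simp add: mat2_mult_def algebra_simps)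

lemma mat2_mult_one_left: "mat2_mult (1, 0, 0, 1) M = M"
  and mat2_mult_one_right: "mat2_mult M (1, 0, 0, 1) = M"
  by (cases M; simp add: mat2_mult_def)+

fun mat2_pow :: "'a::ring_1 mat2 \<Rightarrow> nat \<Rightarrow> 'a mat2" where
  "mat2_pow M 0 = (1, 0, 0, 1)"
| "mat2_pow M (Suc n) = mat2_mult (mat2_pow M n) M"

lemma mat2_pow_Suc_left: "mat2_pow M (Suc n) = mat2_mult M (mat2_pow M n)"
  by (induction n) (simp_all add: mat2_mult_one_left mat2_mult_one_right mat2_mult_assoc)

text \<open>Expanding \<open>M\<^sup>n\<^sup>+\<^sup>1 = M M\<^sup>n\<close> and eliminating the lower left entry.\<close>
lemma mat2_pow_fst_left_recurrence:
  fixes A B D :: "'a::ring_1"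
  defines "a \<equiv> \<lambda>n. fst (mat2_pow (A, 1, B, D) n)"
  shows "a (Suc (Suc n)) = (A + D) * a (Suc n) - (D * A - B) * a n"
proof -
  define c where "c n = fst (snd (snd (mat2_pow (A, 1, B, D) n)))" for n
  have a_Suc: "a (Suc k) = A * a k + c k" and c_Suc: "c (Suc k) = B * a k + D * c k" for k
    unfolding a_def c_def mat2_pow_Suc_left by (cases "mat2_pow (A, 1, B, D) k"; simp add: mat2_mult_def)+
  have "a (Suc (Suc n)) = A * a (Suc n) + B * a n + D * (a (Suc n) - A * a n)"
    using a_Suc[of "Suc n"] c_Suc[of n] a_Suc[of n] by simp
  then show ?thesis by (simp add: algebra_simps)
qed

text \<open>Expanding \<open>M\<^sup>n\<^sup>+\<^sup>1 = M\<^sup>n M\<close> and eliminating the upper right entry, which needs \<open>B\<close> invertible.\<close>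
lemma mat2_pow_fst_right_recurrence:
  fixes A B D :: "'a::division_ring"
  assumes "B \<noteq> 0"
  defines "a \<equiv> \<lambda>n. fst (mat2_pow (A, 1, B, D) n)"
  shows "a (Suc (Suc n)) = a (Suc n) * (A + inverse B * D * B) - a n * (A * inverse B * D * B - B)"
proof -
  define b where "b n = fst (snd (mat2_pow (A, 1, B, D) n))" for n
  have a_Suc: "a (Suc k) = a k * A + b k * B" and b_Suc: "b (Suc k) = a k + b k * D" for k
    unfolding a_def b_def by (cases "mat2_pow (A, 1, B, D) k"; simp add: mat2_mult_def)+
  have b_eq: "b n = (a (Suc n) - a n * A) * inverse B"
    using a_Suc[of n] assms(1) by (simp add: mult.assoc)
  have "a (Suc (Suc n)) = a (Suc n) * A + a n * B + b n * D * B"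
    using a_Suc[of "Suc n"] b_Suc[of n] by (simp add: algebra_simps)
  also have "\<dots> = a (Suc n) * A + a n * B + (a (Suc n) - a n * A) * inverse B * D * B"
    by (simp only: b_eq)
  finally show ?thesis by (simp add: algebra_simps)
qed

section \<open>Three-term recurrences\<close>

lemma three_term_invariant:
  fixes r :: "nat \<Rightarrow> 'a::ring"
  assumes left: "\<And>n. r (Suc (Suc n)) = K * r (Suc n) - C * r n"
    and right: "\<And>n. r (Suc (Suc n)) * C = r (Suc n) * K - r n"
  shows "r (Suc (Suc n)) * C * r n - r (Suc n) * r (Suc n) = r 2 * C * r 0 - r 1 * r 1"
proof (induction n)
  case (Suc n)
  have "r (Suc (Suc (Suc n))) * C * r (Suc n) = r (Suc (Suc n)) * (K * r (Suc n)) - r (Suc n) * r (Suc n)"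
    by (simp add: right algebra_simps)
  also have "K * r (Suc n) = r (Suc (Suc n)) + C * r n"
    using left[of n] by simp
  finally have "r (Suc (Suc (Suc n))) * C * r (Suc n) - r (Suc (Suc n)) * r (Suc (Suc n))
      = r (Suc (Suc n)) * C * r n - r (Suc n) * r (Suc n)"
    by (simp add: algebra_simps)
  with Suc show ?case by simp
qed (simp add: numeral_2_eq_2)

lemma three_term_solution_unique:
  fixes R r :: "nat \<Rightarrow> 'a::division_ring"
  assumes "C \<noteq> 0" and r_nonzero: "\<And>n. r n \<noteq> 0"
    and R_rec: "\<And>n. R (Suc (Suc n)) * C * R n = R (Suc n) * R (Suc n) + 1"
    and r_rec: "\<And>n. r (Suc (Suc n)) * C * r n = r (Suc n) * r (Suc n) + 1"
    and "R 0 = r 0" "R 1 = r 1"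
  shows "R n = r n"
proof -
  have "R n = r n \<and> R (Suc n) = r (Suc n)"
  proof (induction n)
    case (Suc n)
    then have "(R (Suc (Suc n)) - r (Suc (Suc n))) * (C * r n) = 0"
      using R_rec[of n] r_rec[of n] by (simp add: algebra_simps)
    then show ?case
      using Suc \<open>C \<noteq> 0\<close> r_nonzero[of n] by simp
  qed (use assms in simp)
  then show ?thesis ..
qed

section \<open>The transfer matrix of the walks\<close>

definition commutator :: "'a::division_ring \<Rightarrow> 'a \<Rightarrow> 'a" where
  "commutator a b = a * b * inverse a * inverse b"

lemma mult_inverse_cancel:
  fixes a :: "'a::division_ring"
  assumes "a \<noteq> 0"
  shows "a * (inverse a * z) = z" and "inverse a * (a * z) = z"
  using assms by (simp_all add: mult.assoc[symmetric])

lemmas word_normalize = mult_inverse_cancel right_inverse left_inverse mult.assoc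
  distrib_left distrib_right right_diff_distrib left_diff_distrib

text \<open>Two steps from 0 lead back to 0 (weight \<open>y\<^sub>1\<close>) or to 2 (weight 1); two steps from 2
  lead to 0 (weight \<open>y\<^sub>2 y\<^sub>1\<close>) or back to 2 (weight \<open>y\<^sub>2 + y\<^sub>3\<close>).\<close>
definition walk_matrix :: "'a::division_ring \<Rightarrow> 'a \<Rightarrow> 'a mat2" where
  "walk_matrix x y = (yw x y 1, 1, yw x y 2 * yw x y 1, yw x y 2 + yw x y 3)"

lemma walk_matrix_pow_Suc:
  "fst (mat2_pow (walk_matrix x y) (Suc n))
     = fst (mat2_pow (walk_matrix x y) n) * yw x y 1
       + fst (snd (mat2_pow (walk_matrix x y) n)) * (yw x y 2 * yw x y 1)"
  "fst (snd (mat2_pow (walk_matrix x y) (Suc n)))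
     = fst (mat2_pow (walk_matrix x y) n)
       + fst (snd (mat2_pow (walk_matrix x y) n)) * (yw x y 2 + yw x y 3)"
  by (cases "mat2_pow (walk_matrix x y) n"; simp add: walk_matrix_def mat2_mult_def)+

lemma walk_matrix_pow_word_sums:
  "\<exists>ws vs. ws \<noteq> [] \<and> fst (mat2_pow (walk_matrix x y) n) = sum_list (map (word_eval x y) ws)
     \<and> fst (snd (mat2_pow (walk_matrix x y) n)) = sum_list (map (word_eval x y) vs)"
proof (induction n)
  case 0
  show ?case
    by (rule exI[of _ "[[]]"], rule exI[of _ "[]"]) (simp add: word_eval_Nil)
next
  case (Suc n)
  then obtain ws vs where "ws \<noteq> []"
    and a: "fst (mat2_pow (walk_matrix x y) n) = sum_list (map (word_eval x y) ws)"
    and b: "fst (snd (mat2_pow (walk_matrix x y) n)) = sum_list (map (word_eval x y) vs)"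
    by blast
  define u\<^sub>1 where "u\<^sub>1 = [(True, False), (True, False), (False, True), (True, True)]"
  define u\<^sub>2 where "u\<^sub>2 = [(False, True), (True, True)]"
  define u\<^sub>3 where "u\<^sub>3 = [(False, False), (True, True)]"
  have u: "yw x y 1 = word_eval x y u\<^sub>1" "yw x y 2 = word_eval x y u\<^sub>2" "yw x y 3 = word_eval x y u\<^sub>3"
    by (simp_all add: u\<^sub>1_def u\<^sub>2_def u\<^sub>3_def yw_def word_eval_def letter_eval_def mult.assoc)
  have "fst (mat2_pow (walk_matrix x y) (Suc n))
      = sum_list (map (word_eval x y) (map (\<lambda>w. w @ u\<^sub>1) ws @ map (\<lambda>w. w @ u\<^sub>2 @ u\<^sub>1) vs))"
    and "fst (snd (mat2_pow (walk_matrix x y) (Suc n)))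
      = sum_list (map (word_eval x y) (ws @ map (\<lambda>w. w @ u\<^sub>2) vs @ map (\<lambda>w. w @ u\<^sub>3) vs))"
    unfolding walk_matrix_pow_Suc a b u
    by (simp_all add: comp_def word_eval_append sum_list_mult_const distrib_left)
  with \<open>ws \<noteq> []\<close> show ?case by blast
qed

lemma walk_matrix_pow_fst_nonzero:
  "free_pair x y \<Longrightarrow> fst (mat2_pow (walk_matrix x y) n) \<noteq> 0"
  using walk_matrix_pow_word_sums[of x y n] free_pair_sum_words_nonzero by metis

lemma walk_matrix_solution_recurrence:
  fixes x y :: "'a::division_ring"
  assumes x: "x \<noteq> 0" and y: "y \<noteq> 0"
  defines "r \<equiv> \<lambda>n. fst (mat2_pow (walk_matrix x y) n) * (y * x * inverse y)"
  shows "r (Suc (Suc n)) * commutator x y * r n = r (Suc n) * r (Suc n) + 1"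
proof -
  let ?A = "yw x y 1" and ?B = "yw x y 2 * yw x y 1" and ?D = "yw x y 2 + yw x y 3"
  let ?K = "yw x y 1 + yw x y 2 + yw x y 3" and ?C = "commutator x y" and ?R\<^sub>0 = "y * x * inverse y"
  define a where "a n = fst (mat2_pow (?A, 1, ?B, ?D) n)" for n
  have r_eq: "r n = a n * ?R\<^sub>0" for n
    by (simp add: r_def a_def walk_matrix_def)
  have B: "?B \<noteq> 0" and inverse_B: "inverse ?B = y * x * inverse y * x"
    using x y by (simp_all add: yw_def inverse_unique word_normalize)
  have left: "r (Suc (Suc k)) = ?K * r (Suc k) - ?C * r k" for k
  proof -
    have DA_B: "?D * ?A - ?B = ?C"
      using x y by (simp add: yw_def commutator_def word_normalize)
    have "r (Suc (Suc k)) = ((?A + ?D) * a (Suc k) - (?D * ?A - ?B) * a k) * ?R\<^sub>0"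
      unfolding r_eq a_def by (subst mat2_pow_fst_left_recurrence) (rule refl)
    also have "\<dots> = (?K * a (Suc k) - ?C * a k) * ?R\<^sub>0"
      unfolding DA_B by (simp add: add.assoc)
    finally show ?thesis by (simp add: r_eq algebra_simps)
  qed
  have right: "r (Suc (Suc k)) * ?C = r (Suc k) * ?K - r k" for k
  proof -
    have "(?A + inverse ?B * ?D * ?B) * ?R\<^sub>0 * ?C = ?R\<^sub>0 * ?K"
      and "(?A * inverse ?B * ?D * ?B - ?B) * ?R\<^sub>0 * ?C = ?R\<^sub>0"
      unfolding inverse_B using x y by (simp_all add: yw_def commutator_def word_normalize)
    moreover have "r (Suc (Suc k)) * ?C
        = (a (Suc k) * (?A + inverse ?B * ?D * ?B) - a k * (?A * inverse ?B * ?D * ?B - ?B)) * ?R\<^sub>0 * ?C"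
      unfolding r_eq a_def by (subst mat2_pow_fst_right_recurrence[OF B]) (rule refl)
    ultimately show ?thesis by (simp add: r_eq left_diff_distrib mult.assoc)
  qed
  have "r 2 * ?C * r 0 - r 1 * r 1 = 1"
    using x y by (simp add: r_eq a_def numeral_2_eq_2 mat2_mult_def yw_def commutator_def word_normalize)
  then show ?thesis
    using three_term_invariant[of r ?K ?C, OF left right, of n] by (simp add: algebra_simps)
qed

section \<open>Weighted sums of walks\<close>

definition walks :: "nat \<Rightarrow> nat \<Rightarrow> nat list set" where
  "walks m j = {p. length p = m + 1 \<and> p ! 0 = 0 \<and> p ! m = j \<and> set p \<subseteq> {0..3} \<and>
      (\<forall>i < m. p ! (i + 1) = p ! i + 1 \<or> p ! i = p ! (i + 1) + 1)}"

lemma paths_eq_walks: "paths n = walks (2 * n) 0"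
  by (simp add: paths_def walks_def)

lemma finite_walks: "finite (walks m j)"
proof (rule finite_subset)
  show "walks m j \<subseteq> {p. set p \<subseteq> {0..3} \<and> length p = m + 1}"
    by (auto simp: walks_def)
  show "finite {p. set p \<subseteq> {0..3::nat} \<and> length p = m + 1}"
    by (rule finite_lists_length_eq) simp
qed

lemma walks_0: "walks 0 j = (if j = 0 then {[0]} else {})"
  by (auto simp: walks_def length_Suc_conv)

lemma walks_snoc_iff:
  assumes "length p = Suc m"
  shows "p @ [j] \<in> walks (Suc m) j'
    \<longleftrightarrow> j' = j \<and> j \<le> 3 \<and> p \<in> walks m (p ! m) \<and> (p ! m + 1 = j \<or> p ! m = j + 1)"
  using assms by (auto simp: walks_def nth_append All_less_Suc)

lemma walks_Suc:
  assumes "j \<le> 3"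
  shows "walks (Suc m) j = (\<lambda>p. p @ [j]) ` ({p \<in> walks m (j - 1). 0 < j} \<union> walks m (Suc j))"
proof (intro equalityI subsetI)
  fix q assume q: "q \<in> walks (Suc m) j"
  then have "length q = Suc (Suc m)" and "q ! Suc m = j"
    by (simp_all add: walks_def)
  then obtain p where "q = p @ [j]" and p: "length p = Suc m"
    by (cases q rule: rev_cases) (auto simp: nth_append)
  then show "q \<in> (\<lambda>p. p @ [j]) ` ({p \<in> walks m (j - 1). 0 < j} \<union> walks m (Suc j))"
    using q walks_snoc_iff[OF p] by force
next
  fix q assume "q \<in> (\<lambda>p. p @ [j]) ` ({p \<in> walks m (j - 1). 0 < j} \<union> walks m (Suc j))"
  then obtain p where "q = p @ [j]" and "p \<in> walks m (j - 1) \<and> 0 < j \<or> p \<in> walks m (Suc j)"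
    by blast
  moreover have "length p = Suc m" and "p ! m = (if p \<in> walks m (Suc j) then Suc j else j - 1)"
    using calculation by (auto simp: walks_def)
  ultimately show "q \<in> walks (Suc m) j"
    using walks_snoc_iff assms by (auto split: if_splits)
qed

lemma path_weight_snoc:
  assumes "p \<noteq> []"
  shows "path_weight x y (p @ [j]) = path_weight x y p * (if j = last p + 1 then 1 else yw x y (last p))"
proof -
  have indices: "[0..<length (p @ [j]) - 1] = [0..<length p - 1] @ [length p - 1]"
    using assms by (cases "length p") auto
  have prefix: "map (\<lambda>i. if (p @ [j]) ! (i + 1) = (p @ [j]) ! i + 1 then 1 else yw x y ((p @ [j]) ! i))
        [0..<length p - 1]
      = map (\<lambda>i. if p ! (i + 1) = p ! i + 1 then 1 else yw x y (p ! i)) [0..<length p - 1]"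
    by (intro map_cong refl) (auto simp: nth_append)
  have "(p @ [j]) ! (length p - 1 + 1) = j" "(p @ [j]) ! (length p - 1) = last p"
    using assms by (auto simp: nth_append last_conv_nth)
  then show ?thesis
    unfolding path_weight_def indices map_append prefix by simp
qed

definition walk_sum :: "'a::division_ring \<Rightarrow> 'a \<Rightarrow> nat \<Rightarrow> nat \<Rightarrow> 'a" where
  "walk_sum x y m j = (\<Sum>p\<in>walks m j. path_weight x y p)"

lemma walk_sum_Suc:
  assumes "j \<le> 3"
  shows "walk_sum x y (Suc m) j
    = (if 0 < j then walk_sum x y m (j - 1) else 0) + walk_sum x y m (Suc j) * yw x y (Suc j)"
proof -
  let ?U = "{p \<in> walks m (j - 1). 0 < j}" and ?D = "walks m (Suc j)"
  have last_walk: "p \<noteq> [] \<and> last p = k" if "p \<in> walks m k" for p k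
  proof -
    have "length p = Suc m" and "p ! m = k"
      using that by (simp_all add: walks_def)
    moreover from this have "p \<noteq> []" by auto
    ultimately show ?thesis by (simp add: last_conv_nth)
  qed
  have "walk_sum x y (Suc m) j = (\<Sum>p\<in>?U \<union> ?D. path_weight x y (p @ [j]))"
    unfolding walk_sum_def walks_Suc[OF assms]
    by (rule sum.reindex[unfolded comp_def]) (auto simp: inj_on_def)
  also have "\<dots> = (\<Sum>p\<in>?U. path_weight x y (p @ [j])) + (\<Sum>p\<in>?D. path_weight x y (p @ [j]))"
    by (rule sum.union_disjoint) (auto simp: finite_walks, auto simp: walks_def)
  also have "(\<Sum>p\<in>?U. path_weight x y (p @ [j])) = (\<Sum>p\<in>?U. path_weight x y p)"
    by (intro sum.cong refl) (auto simp: path_weight_snoc dest: last_walk)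
  also have "(\<Sum>p\<in>?D. path_weight x y (p @ [j])) = (\<Sum>p\<in>?D. path_weight x y p * yw x y (Suc j))"
    by (intro sum.cong refl) (auto simp: path_weight_snoc dest: last_walk)
  finally show ?thesis
    by (simp add: walk_sum_def sum_distrib_right)
qed

lemma walk_sum_steps:
  "walk_sum x y (Suc m) 0 = walk_sum x y m 1 * yw x y 1"
  "walk_sum x y (Suc m) 1 = walk_sum x y m 0 + walk_sum x y m 2 * yw x y 2"
  "walk_sum x y (Suc m) 2 = walk_sum x y m 1 + walk_sum x y m 3 * yw x y 3"
  "walk_sum x y (Suc m) 3 = walk_sum x y m 2"
  using walk_sum_Suc[of 0 x y m] walk_sum_Suc[of 1 x y m] walk_sum_Suc[of 2 x y m]
    walk_sum_Suc[of 3 x y m]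
  by (simp_all add: yw_def numeral_eq_Suc)

lemma walk_sum_eq_walk_matrix_pow:
  "walk_sum x y (2 * n) 0 = fst (mat2_pow (walk_matrix x y) n)
   \<and> walk_sum x y (2 * n) 2 = fst (snd (mat2_pow (walk_matrix x y) n))"
proof (induction n)
  case 0
  show ?case by (simp add: walk_sum_def walks_0 path_weight_def)
next
  case (Suc n)
  have two_steps: "2 * Suc n = Suc (Suc (2 * n))" by simp
  show ?case
    unfolding two_steps walk_sum_steps walk_matrix_pow_Suc using Suc by (simp add: algebra_simps)
qed

theorem theorem3p5:
  fixes x y :: "'a::division_ring" and R :: "int \<Rightarrow> 'a"
  assumes free: "free_pair x y"
    and rec: "\<And>n. R (n + 1) * (x * y * inverse x * inverse y) * R (n - 1) = R n * R n + 1"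
    and R0: "R 0 = y * x * inverse y"
    and R1: "R 1 = y"
  shows "\<forall>n::nat. R (int n) * inverse (R 0) = (\<Sum>p\<in>paths n. path_weight x y p)"
proof
  fix n :: nat
  have x: "x \<noteq> 0" and y: "y \<noteq> 0"
    using free_pair_nonzero[OF free] by auto
  define r where "r k = fst (mat2_pow (walk_matrix x y) k) * (y * x * inverse y)" for k
  have "R (int k) = r k" for k
  proof (rule three_term_solution_unique[where C = "commutator x y" and R = "\<lambda>k. R (int k)"])
    show "commutator x y \<noteq> 0"
      using x y by (simp add: commutator_def)
    show "r k \<noteq> 0" for k
      using walk_matrix_pow_fst_nonzero[OF free] x y by (simp add: r_def)
    show "R (int (Suc (Suc k))) * commutator x y * R (int k) = R (int (Suc k)) * R (int (Suc k)) + 1" for k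
      using rec[of "int (Suc k)"] by (simp add: commutator_def add.commute)
    show "r (Suc (Suc k)) * commutator x y * r k = r (Suc k) * r (Suc k) + 1" for k
      unfolding r_def by (rule walk_matrix_solution_recurrence[OF x y])
    show "R (int 0) = r 0" and "R (int 1) = r 1"
      using R0 R1 x y by (simp_all add: r_def walk_matrix_def mat2_mult_def yw_def word_normalize)
  qed
  then have "R (int n) * inverse (R 0) = fst (mat2_pow (walk_matrix x y) n) * (R 0 * inverse (R 0))"
    by (simp add: r_def R0 mult.assoc)
  moreover have "R 0 \<noteq> 0"
    using R0 x y by simp
  ultimately have "R (int n) * inverse (R 0) = fst (mat2_pow (walk_matrix x y) n)"
    by simp
  then show "R (int n) * inverse (R 0) = (\<Sum>p\<in>paths n. path_weight x y p)"
    by (simp add: paths_eq_walks walk_sum_eq_walk_matrix_pow flip: walk_sum_def)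
qed

end
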